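(* Let $C=(Q,\Sigma,\Psi)$ be a HMM over a finite profile language $\Gamma=\{\beta_1,\dots,\beta_K\}$ with labelling reduction $L=(Q,\hat\Sigma,\hat M)$. Then for any initial distributions $\pi_1,\pi_2$, $\pi_1\equiv_L\pi_2$ implies $\pi_1\equiv_C\pi_2$.
   Context: Let $(\Sigma,\mathscr{G},\lambda)$ be a measure space where $\Sigma$ is a topological space and every open subset belongs to $\mathscr{G}$ and has positive measure. A HMM is $(Q,\Sigma,\Psi)$ with $Q$ finite and $\Psi:\Sigma\to[0,\infty)^{|Q|\times|Q|}$ piecewise continuous (continuous on an open set $C'$ such that every point outside $C'$ is a limit of points $x_n\in C'$ with $\Psi(x_n)$ converging to its value) with $\int_\Sigma\Psi\,d\lambda$ stochastic. For an initial distribution $\pi$, $\mathbb{P}_\pi$ is the unique probability measure on $\Sigma^\omega$ with $\mathbb{P}_\pi(A\Sigma^\omega)=\pi\left(\int_A\Psi\,d\lambda^n\right)\mathbbm{1}^T$ for all cylinder sets $A=A_1\times\dots\times A_n\subseteq\Sigma^n$, where $\Psi(x_1\cdots x_n)=\Psi(x_1)\cdots\Psi(x_n)$ and $\lambda^n$ is the product measure; $\pi_1\equiv_C\pi_2$ means $\mathbb{P}_{\pi_1}=\mathbb{P}_{\pi_2}$. For a finite observation set with counting measure, $\Psi$ is just a family of matrices $\Psi(a)$ with $\sum_a\Psi(a)$ stochastic. Profiles $\gamma$ encode functions $[\![\gamma]\!]:\Sigma\to[0,\infty)$. $C$ is over $\Gamma$ if $\Psi$ is given as a matrix whose entries are $0$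 or pairs $(p_{i,j},\gamma_{i,j})\in\mathbb{Q}_+\times\Gamma$ with $\Psi_{i,j}=p_{i,j}[\![\gamma_{i,j}]\!]$ and $\int_\Sigma[\![\gamma_{i,j}]\!]d\lambda=1$. The labelling reduction is the finite-observation HMM $(Q,\hat\Sigma,\hat M)$ with $\hat\Sigma=\{a_1,\dots,a_K\}$ fresh letters and $\hat M_{i,j}(a_k)=p_{i,j}$ if $\gamma_{i,j}=\beta_k$ and $0$ otherwise. *)

theory Defs
  imports "HOL-Probability.Probability"
begin

type_synonym 'q mat = "'q \<Rightarrow> 'q \<Rightarrow> real"

definition mat_one :: "'q mat" where
  "mat_one i j = (if i = j then 1 else 0)"

definition mat_mult :: "'q::finite mat \<Rightarrow> 'q mat \<Rightarrow> 'q mat" where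
  "mat_mult A B i j = (\<Sum>k\<in>UNIV. A i k * B k j)"

fun word_prod :: "('a \<Rightarrow> 'q::finite mat) \<Rightarrow> nat \<Rightarrow> (nat \<Rightarrow> 'a) \<Rightarrow> 'q mat" where
  "word_prod Psi 0 x = mat_one"
| "word_prod Psi (Suc n) x = mat_mult (word_prod Psi n x) (Psi (x n))"

definition cyl_value ::
  "'a measure \<Rightarrow> ('a \<Rightarrow> 'q::finite mat) \<Rightarrow> ('q \<Rightarrow> real) \<Rightarrow> nat \<Rightarrow> (nat \<Rightarrow> 'a set) \<Rightarrow> ennreal" where
  "cyl_value M Psi \<pi> n A =
     (\<Sum>i\<in>UNIV. \<Sum>j\<in>UNIV. ennreal (\<pi> i) *
        (\<integral>\<^sup>+ x. indicator (PiE {..<n} A) x * ennreal (word_prod Psi n x i j)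
            \<partial>(PiM {..<n} (\<lambda>_. M))))"

definition hmm_prob ::
  "'a measure \<Rightarrow> ('a \<Rightarrow> 'q::finite mat) \<Rightarrow> ('q \<Rightarrow> real) \<Rightarrow> 'a stream measure" where
  "hmm_prob M Psi \<pi> = (THE N. sets N = sets (stream_space M) \<and> prob_space N \<and>
      (\<forall>n A. (\<forall>i<n. A i \<in> sets M) \<longrightarrow>
         emeasure N {\<omega> \<in> space (stream_space M). \<forall>i<n. \<omega> !! i \<in> A i}
           = cyl_value M Psi \<pi> n A))"

definition hmm_equiv ::
  "'a measure \<Rightarrow> ('a \<Rightarrow> 'q::finite mat) \<Rightarrow> ('q \<Rightarrow> real) \<Rightarrow> ('q \<Rightarrow> real) \<Rightarrow> bool" where
  "hmm_equiv M Psi \<pi>1 \<pi>2 \<longleftrightarrow> hmm_prob M Psi \<pi>1 = hmm_prob M Psi \<pi>2"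

definition distribution :: "('q::finite \<Rightarrow> real) \<Rightarrow> bool" where
  "distribution \<pi> \<longleftrightarrow> (\<forall>i. \<pi> i \<ge> 0) \<and> (\<Sum>i\<in>UNIV. \<pi> i) = 1"

definition piecewise_continuous :: "('a::topological_space \<Rightarrow> 'b::topological_space) \<Rightarrow> bool" where
  "piecewise_continuous f \<longleftrightarrow> (\<exists>C'. open C' \<and> continuous_on C' f \<and>
     (\<forall>x. x \<notin> C' \<longrightarrow> (\<exists>X. (\<forall>n. X n \<in> C') \<and> X \<longlonglongrightarrow> x \<and> (\<lambda>n. f (X n)) \<longlonglongrightarrow> f x)))"

definition is_hmm :: "'a::topological_space measure \<Rightarrow> ('a \<Rightarrow> 'q::finite mat) \<Rightarrow> bool" where
  "is_hmm M Psi \<longleftrightarrow> (\<forall>x i j. Psi x i j \<ge> 0) \<and> piecewise_continuous Psi \<and>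
     (\<forall>i j. (\<lambda>x. Psi x i j) \<in> borel_measurable M) \<and>
     (\<forall>i. (\<Sum>j\<in>UNIV. \<integral>\<^sup>+ x. ennreal (Psi x i j) \<partial>M) = 1)"

definition psi_of :: "('g \<Rightarrow> 'a \<Rightarrow> real) \<Rightarrow> ('q \<Rightarrow> 'q \<Rightarrow> (real \<times> 'g) option) \<Rightarrow> 'a \<Rightarrow> 'q mat" where
  "psi_of sem E x i j = (case E i j of None \<Rightarrow> 0 | Some (p, \<gamma>) \<Rightarrow> p * sem \<gamma> x)"

text \<open>Labelling reduction: alphabet = the profiles (fresh letter a_k identified with beta_k).\<close>
definition label_red :: "('q \<Rightarrow> 'q \<Rightarrow> (real \<times> 'g) option) \<Rightarrow> 'g \<Rightarrow> 'q mat" where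
  "label_red E a i j = (case E i j of None \<Rightarrow> 0 | Some (p, \<gamma>) \<Rightarrow> if \<gamma> = a then p else 0)"

end

theory Submission
  imports Defs
begin

text \<open>Write \<open>\<Psi>(x) = \<Sum>\<^sub>a L(a) s\<^sub>a(x)\<close>, where \<open>L\<close> is the labelling reduction and \<open>s\<^sub>a\<close> the
  density of profile \<open>a\<close>. Expanding the matrix product over a word multilinearly, every cylinder
  value of \<open>C\<close> becomes \<open>\<Sum>\<^sub>w (\<pi> L(w) 1\<^sup>T) \<cdot> \<integral>\<^sub>A \<Prod>\<^sub>k s\<^sub>w\<^sub>k(x\<^sub>k)\<close>, a combination of the
  probabilities of single words in \<open>L\<close> with coefficients independent of \<open>\<pi>\<close>. So if \<open>\<pi>\<^sub>1\<close> and
  \<open>\<pi>\<^sub>2\<close> give the same word probabilities in \<open>L\<close>, they give the same cylinder values in \<open>C\<close>, and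
  hence the same measure. Reading word probabilities off \<open>\<bbbP>\<^sub>\<pi>\<close> for \<open>L\<close> requires that measure to
  exist; it is built as the law of a chain driven by i.i.d. random maps. Neither the topology nor
  piecewise continuity plays a role.\<close>

section \<open>Matrix products over words\<close>

lemma mat_mult_assoc: "mat_mult (mat_mult A B) C = mat_mult A (mat_mult B C)"
proof (intro ext)
  fix i j
  show "mat_mult (mat_mult A B) C i j = mat_mult A (mat_mult B C) i j"
    unfolding mat_mult_def
    by (simp add: sum_distrib_left sum_distrib_right mult.assoc) (rule sum.swap)
qed

lemma mat_mult_one_left [simp]: "mat_mult mat_one A = A"
  by (intro ext) (simp add: mat_mult_def mat_one_def mult_delta_left)

lemma mat_mult_one_right [simp]: "mat_mult A mat_one = A"
  by (intro ext) (simp add: mat_mult_def mat_one_def mult_delta_right)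

lemma word_prod_cong: "(\<And>k. k < n \<Longrightarrow> x k = y k) \<Longrightarrow> word_prod Psi n x = word_prod Psi n y"
  by (induction n) auto

lemma word_prod_comp: "word_prod Psi n x = word_prod id n (Psi \<circ> x)"
  by (induction n) simp_all

lemma word_prod_Suc_left:
  "word_prod Psi (Suc n) x = mat_mult (Psi (x 0)) (word_prod Psi n (\<lambda>k. x (Suc k)))"
  by (induction n) (auto simp: mat_mult_assoc)

lemma word_prod_nonneg:
  assumes "\<And>a i j. Psi a i j \<ge> 0"
  shows "word_prod Psi n x i j \<ge> 0"
  using assms by (induction n arbitrary: j) (auto simp: mat_mult_def mat_one_def intro!: sum_nonneg)

lemma sum_PiE_lessThan_Suc:
  assumes "\<And>k. finite (B k)"
  shows "(\<Sum>g\<in>PiE {..<Suc n} B. h g) = (\<Sum>g\<in>PiE {..<n} B. \<Sum>a\<in>B n. h (g(n := a)))"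
proof -
  have "(\<Sum>g\<in>PiE {..<Suc n} B. h g) = (\<Sum>p\<in>B n \<times> PiE {..<n} B. h ((\<lambda>(a, g). g(n := a)) p))"
    unfolding lessThan_Suc by (subst PiE_insert_eq, subst sum.reindex) (auto intro!: inj_combinator)
  also have "\<dots> = (\<Sum>g\<in>PiE {..<n} B. \<Sum>a\<in>B n. h (g(n := a)))"
    by (subst sum.swap) (simp add: sum.cartesian_product split_def)
  finally show ?thesis .
qed

lemma word_prod_multilinear:
  fixes PsiL :: "'g \<Rightarrow> 'q::finite mat"
  assumes "\<And>k. finite (A k)"
  shows "word_prod id n (\<lambda>k i j. \<Sum>a\<in>A k. c k a * PsiL a i j) i j
       = (\<Sum>g\<in>PiE {..<n} A. (\<Prod>k<n. c k (g k)) * word_prod PsiL n g i j)"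
proof (induction n arbitrary: j)
  case (Suc n)
  have update: "word_prod PsiL n (g(n := a)) = word_prod PsiL n g" for g a
    by (rule word_prod_cong) simp
  have "word_prod id (Suc n) (\<lambda>k i j. \<Sum>a\<in>A k. c k a * PsiL a i j) i j
      = (\<Sum>l\<in>UNIV. (\<Sum>g\<in>PiE {..<n} A. (\<Prod>k<n. c k (g k)) * word_prod PsiL n g i l)
                     * (\<Sum>a\<in>A n. c n a * PsiL a l j))"
    by (simp add: mat_mult_def Suc.IH)
  also have "\<dots> = (\<Sum>g\<in>PiE {..<n} A. \<Sum>a\<in>A n.
                    (\<Prod>k<n. c k (g k)) * c n a * (\<Sum>l\<in>UNIV. word_prod PsiL n g i l * PsiL a l j))"
    by (simp add: sum_product sum_distrib_left mult_ac sum.swap[of _ UNIV])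
  also have "\<dots> = (\<Sum>g\<in>PiE {..<n} A. \<Sum>a\<in>A n.
                    (\<Prod>k<Suc n. c k ((g(n := a)) k)) * word_prod PsiL (Suc n) (g(n := a)) i j)"
    by (simp add: update mat_mult_def)
  also have "\<dots> = (\<Sum>g\<in>PiE {..<Suc n} A. (\<Prod>k<Suc n. c k (g k)) * word_prod PsiL (Suc n) g i j)"
    by (rule sum_PiE_lessThan_Suc[symmetric]) fact
  finally show ?case .
qed simp

section \<open>Cylinder values\<close>

definition cyl_matrix :: "('g::finite \<Rightarrow> 'q::finite mat) \<Rightarrow> nat \<Rightarrow> (nat \<Rightarrow> 'g set) \<Rightarrow> 'q mat" where
  "cyl_matrix PsiL n A i j = (\<Sum>x\<in>PiE {..<n} A. word_prod PsiL n x i j)"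

lemma cyl_matrix_eq_word_prod:
  "cyl_matrix PsiL n A = word_prod id n (\<lambda>k i j. \<Sum>a\<in>A k. PsiL a i j)"
  using word_prod_multilinear[of A n "\<lambda>_ _. 1" PsiL] by (auto simp: cyl_matrix_def fun_eq_iff)

lemma cyl_matrix_Suc:
  "cyl_matrix PsiL (Suc n) A = mat_mult (\<lambda>i j. \<Sum>a\<in>A 0. PsiL a i j) (cyl_matrix PsiL n (\<lambda>k. A (Suc k)))"
  unfolding cyl_matrix_eq_word_prod word_prod_Suc_left by simp

lemma sum_cyl_matrix_Suc:
  "(\<Sum>j\<in>UNIV. cyl_matrix PsiL (Suc n) A i j)
     = (\<Sum>a\<in>A 0. \<Sum>l\<in>UNIV. PsiL a i l * (\<Sum>j\<in>UNIV. cyl_matrix PsiL n (\<lambda>k. A (Suc k)) l j))"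
proof -
  have "(\<Sum>j\<in>UNIV. cyl_matrix PsiL (Suc n) A i j)
      = (\<Sum>l\<in>UNIV. \<Sum>j\<in>UNIV. (\<Sum>a\<in>A 0. PsiL a i l) * cyl_matrix PsiL n (\<lambda>k. A (Suc k)) l j)"
    unfolding cyl_matrix_Suc mat_mult_def by (rule sum.swap)
  then show ?thesis
    by (simp add: sum_distrib_left sum_distrib_right sum.swap[of _ "A 0"])
qed

lemma cyl_matrix_singletons:
  "g \<in> extensional {..<n} \<Longrightarrow> cyl_matrix PsiL n (\<lambda>k. {g k}) = word_prod PsiL n g"
  by (simp add: cyl_matrix_def PiE_singleton fun_eq_iff)

lemma cyl_matrix_nonneg:
  "(\<And>a i j. PsiL a i j \<ge> 0) \<Longrightarrow> cyl_matrix PsiL n A i j \<ge> 0"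
  unfolding cyl_matrix_def by (intro sum_nonneg word_prod_nonneg)

lemma word_prod_expansion:
  fixes PsiL :: "'g::finite \<Rightarrow> 'q::finite mat"
  assumes "\<And>x i j. Psi x i j = (\<Sum>a\<in>UNIV. PsiL a i j * s a x)"
  shows "word_prod Psi n x i j
       = (\<Sum>g\<in>PiE {..<n} (\<lambda>_. UNIV). word_prod PsiL n g i j * (\<Prod>k<n. s (g k) (x k)))"
proof -
  have "Psi \<circ> x = (\<lambda>k i j. \<Sum>a\<in>UNIV. s a (x k) * PsiL a i j)"
    using assms by (simp add: fun_eq_iff mult.commute)
  then show ?thesis
    using word_prod_multilinear[of "\<lambda>_. UNIV" n "\<lambda>k a. s a (x k)" PsiL i j]
    by (simp add: word_prod_comp[of Psi] mult.commute)
qed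

lemma cyl_value_count_space:
  fixes PsiL :: "'g::finite \<Rightarrow> 'q::finite mat"
  assumes "\<And>a i j. PsiL a i j \<ge> 0"
  shows "cyl_value (count_space UNIV) PsiL \<pi> n A
       = (\<Sum>i\<in>UNIV. \<Sum>j\<in>UNIV. ennreal (\<pi> i) * ennreal (cyl_matrix PsiL n A i j))"
proof -
  have "PiM {..<n} (\<lambda>_. count_space UNIV) = count_space (PiE {..<n} (\<lambda>_. UNIV::'g set))"
    by (rule count_space_PiM_finite) auto
  moreover have "finite (PiE {..<n} (\<lambda>_. UNIV::'g set))"
    by (rule finite_PiE) auto
  moreover have "PiE {..<n} A \<subseteq> PiE {..<n} (\<lambda>_. UNIV)"
    by auto
  ultimately show ?thesis
    using assms unfolding cyl_value_def cyl_matrix_def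
    by (simp add: nn_integral_count_space_finite sum.If_cases indicator_def Int_absorb1
                  sum_ennreal word_prod_nonneg)
qed

lemma cyl_value_expansion:
  fixes PsiL :: "'g::finite \<Rightarrow> 'q::finite mat" and s :: "'g \<Rightarrow> 'a \<Rightarrow> real"
  assumes expansion: "\<And>x i j. Psi x i j = (\<Sum>a\<in>UNIV. PsiL a i j * s a x)"
    and PsiL_nonneg: "\<And>a i j. PsiL a i j \<ge> 0"
    and s_nonneg: "\<And>a x. s a x \<ge> 0"
    and s_measurable: "\<And>a. s a \<in> borel_measurable M"
    and A: "\<forall>k<n. A k \<in> sets M"
  shows "cyl_value M Psi \<pi> n A = (\<Sum>g\<in>PiE {..<n} (\<lambda>_. UNIV).
           cyl_value (count_space UNIV) PsiL \<pi> n (\<lambda>k. {g k}) *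
           (\<integral>\<^sup>+x. indicator (PiE {..<n} A) x * ennreal (\<Prod>k<n. s (g k) (x k)) \<partial>PiM {..<n} (\<lambda>_. M)))"
proof -
  let ?G = "PiE {..<n} (\<lambda>_. UNIV::'g set)"
  let ?f = "\<lambda>g x. indicator (PiE {..<n} A) x * ennreal (\<Prod>k<n. s (g k) (x k))"
  let ?I = "\<lambda>g. \<integral>\<^sup>+x. ?f g x \<partial>PiM {..<n} (\<lambda>_. M)"
  have "PiE {..<n} A \<in> sets (PiM {..<n} (\<lambda>_. M))"
    using A by (intro sets_PiM_I_finite) auto
  then have f_measurable: "?f g \<in> borel_measurable (PiM {..<n} (\<lambda>_. M))" for g
    using s_measurable by measurable
  have integrand: "indicator (PiE {..<n} A) x * ennreal (word_prod Psi n x i j)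
      = (\<Sum>g\<in>?G. ennreal (word_prod PsiL n g i j) * ?f g x)" for x i j
    using PsiL_nonneg s_nonneg
    by (simp add: word_prod_expansion[OF expansion] sum_distrib_left mult_ac ennreal_mult' prod_nonneg
                  word_prod_nonneg flip: sum_ennreal)
  have integral: "(\<integral>\<^sup>+x. indicator (PiE {..<n} A) x * ennreal (word_prod Psi n x i j) \<partial>PiM {..<n} (\<lambda>_. M))
      = (\<Sum>g\<in>?G. ennreal (word_prod PsiL n g i j) * ?I g)" for i j
    using f_measurable by (simp add: integrand nn_integral_sum nn_integral_cmult)
  have coefficient: "cyl_value (count_space UNIV) PsiL \<pi> n (\<lambda>k. {g k})
      = (\<Sum>i\<in>UNIV. \<Sum>j\<in>UNIV. ennreal (\<pi> i) * ennreal (word_prod PsiL n g i j))" if "g \<in> ?G" for g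
    using that PsiL_nonneg by (simp add: cyl_value_count_space cyl_matrix_singletons PiE_def)
  have "cyl_value M Psi \<pi> n A
      = (\<Sum>i\<in>UNIV. \<Sum>j\<in>UNIV. \<Sum>g\<in>?G. ennreal (\<pi> i) * ennreal (word_prod PsiL n g i j) * ?I g)"
    by (simp add: cyl_value_def integral sum_distrib_left mult.assoc)
  also have "\<dots> = (\<Sum>g\<in>?G. \<Sum>i\<in>UNIV. \<Sum>j\<in>UNIV. ennreal (\<pi> i) * ennreal (word_prod PsiL n g i j) * ?I g)"
    by (subst sum.swap, subst (2) sum.swap) (simp add: sum.swap[of _ ?G])
  also have "\<dots> = (\<Sum>g\<in>?G. cyl_value (count_space UNIV) PsiL \<pi> n (\<lambda>k. {g k}) * ?I g)"
    by (simp add: coefficient sum_distrib_right)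
  finally show ?thesis .
qed

section \<open>The measure of a discrete HMM\<close>

lemma sets_Collect_lessThan_All:
  fixes n :: nat
  assumes "\<And>k. k < n \<Longrightarrow> f k \<in> measurable N (M k)" and "\<And>k. k < n \<Longrightarrow> A k \<in> sets (M k)"
  shows "{x \<in> space N. \<forall>k<n. f k x \<in> A k} \<in> sets N"
proof -
  have "{x \<in> space N. f k x \<in> A k} \<in> sets N" if "k < n" for k
  proof -
    have "f k -` A k \<inter> space N \<in> sets N"
      using measurable_sets assms that by blast
    moreover have "f k -` A k \<inter> space N = {x \<in> space N. f k x \<in> A k}"
      by auto
    ultimately show ?thesis by simp
  qed
  then have "{x \<in> space N. \<forall>k\<in>{..<n}. f k x \<in> A k} \<in> sets N"
    by (intro sets.sets_Collect_finite_All) simp_all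
  then show ?thesis by (simp only: Ball_def lessThan_iff)
qed

lemma pmf_embed_pmf_finite:
  fixes f :: "'a::finite \<Rightarrow> real"
  assumes "\<And>x. f x \<ge> 0" and "(\<Sum>x\<in>UNIV. f x) = 1"
  shows "pmf (embed_pmf f) x = f x"
  using assms by (intro pmf_embed_pmf) (simp_all add: nn_integral_count_space_finite sum_ennreal)

text \<open>A stream \<open>fs\<close> of maps from states to (letter, state) pairs drives the chain: in state \<open>q\<close>,
  step \<open>n\<close> emits \<open>fst (fs\<^sub>n q)\<close> and moves to \<open>snd (fs\<^sub>n q)\<close>. Taking the maps i.i.d. with
  \<open>fs\<^sub>n q\<close> distributed as the \<open>q\<close>-th row of the letter matrices realises the discrete HMM.\<close>

fun chain_state :: "('q \<Rightarrow> 'g \<times> 'q) stream \<Rightarrow> 'q \<Rightarrow> nat \<Rightarrow> 'q" where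
  "chain_state fs i 0 = i"
| "chain_state fs i (Suc n) = chain_state (stl fs) (snd (shd fs i)) n"

definition chain_obs :: "('q \<Rightarrow> 'g \<times> 'q) stream \<Rightarrow> 'q \<Rightarrow> nat \<Rightarrow> 'g" where
  "chain_obs fs i n = fst ((fs !! n) (chain_state fs i n))"

lemma chain_obs_0 [simp]: "chain_obs (f ## fs) i 0 = fst (f i)"
  by (simp add: chain_obs_def)

lemma chain_obs_Suc [simp]: "chain_obs (f ## fs) i (Suc k) = chain_obs fs (snd (f i)) k"
  by (simp add: chain_obs_def)

lemma measurable_chain_state [measurable]:
  fixes F :: "('q::countable \<Rightarrow> 'g \<times> 'q) pmf"
  shows "(\<lambda>fs. chain_state fs i n) \<in> measurable (stream_space (measure_pmf F)) (count_space UNIV)"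
proof (induction n arbitrary: i)
  case (Suc n)
  show ?case
    by (simp, rule measurable_compose_countable[where f="\<lambda>j fs. chain_state (stl fs) j n"])
       (rule measurable_compose[OF measurable_stl Suc.IH], rule measurable_compose[OF measurable_shd], simp)
qed simp

lemma measurable_chain_obs [measurable]:
  fixes F :: "('q::countable \<Rightarrow> 'g \<times> 'q) pmf"
  shows "(\<lambda>fs. chain_obs fs i n) \<in> measurable (stream_space (measure_pmf F)) (count_space UNIV)"
  unfolding chain_obs_def
  by (rule measurable_compose_countable[where f="\<lambda>j fs. fst ((fs !! n) j)"])
     (rule measurable_compose[OF measurable_snth], simp, rule measurable_chain_state)

lemma emeasure_chain_obs_cylinder:
  fixes K :: "'q::finite \<Rightarrow> ('g::finite \<times> 'q) pmf" and PsiL :: "'g \<Rightarrow> 'q mat"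
  assumes K: "\<And>i a l. pmf (K i) (a, l) = PsiL a i l"
  shows "emeasure (stream_space (measure_pmf (Pi_pmf UNIV undefined K)))
           {fs \<in> space (stream_space (measure_pmf (Pi_pmf UNIV undefined K))). \<forall>k<n. chain_obs fs i k \<in> A k}
       = ennreal (\<Sum>j\<in>UNIV. cyl_matrix PsiL n A i j)"
proof (induction n arbitrary: i A)
  case 0
  interpret prob_space "stream_space (measure_pmf (Pi_pmf UNIV undefined K))"
    by (rule prob_space.prob_space_stream_space[OF prob_space_measure_pmf])
  show ?case
    by (simp add: cyl_matrix_def mat_one_def emeasure_space_1)
next
  case (Suc n)
  let ?F = "Pi_pmf UNIV undefined K"
  let ?S = "stream_space (measure_pmf ?F)"
  let ?X = "\<lambda>n i A. {fs \<in> space ?S. \<forall>k<n. chain_obs fs i k \<in> A k}"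
  let ?R = "\<lambda>l. \<Sum>j\<in>UNIV. cyl_matrix PsiL n (\<lambda>k. A (Suc k)) l j"
  define h where "h y = indicator (A 0) (fst y) * ?R (snd y)" for y :: "'g \<times> 'q"
  have PsiL_nonneg: "PsiL a i l \<ge> 0" for a i l
    by (simp flip: K)
  have h_nonneg: "h y \<ge> 0" for y
    unfolding h_def by (intro mult_nonneg_nonneg sum_nonneg cyl_matrix_nonneg PsiL_nonneg) auto
  have "?X (Suc n) i A \<in> sets ?S"
    by (rule sets_Collect_lessThan_All[where M="\<lambda>_. count_space UNIV"]) simp_all
  then have "emeasure ?S (?X (Suc n) i A) = (\<integral>\<^sup>+t. emeasure ?S {x \<in> space ?S. t ## x \<in> ?X (Suc n) i A} \<partial>?F)"
    by (rule prob_space.emeasure_stream_space[OF prob_space_measure_pmf])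
  also have "\<dots> = (\<integral>\<^sup>+t. ennreal (h (t i)) \<partial>?F)"
  proof (intro nn_integral_cong)
    fix t :: "'q \<Rightarrow> 'g \<times> 'q"
    have "{x \<in> space ?S. t ## x \<in> ?X (Suc n) i A}
        = (if fst (t i) \<in> A 0 then ?X n (snd (t i)) (\<lambda>k. A (Suc k)) else {})"
      by (auto simp: space_stream_space less_Suc_eq_0_disj)
    then show "emeasure ?S {x \<in> space ?S. t ## x \<in> ?X (Suc n) i A} = ennreal (h (t i))"
      by (simp add: Suc.IH h_def)
  qed
  also have "\<dots> = (\<integral>\<^sup>+y. ennreal (h y) \<partial>measure_pmf (map_pmf (\<lambda>t. t i) ?F))"
    by simp
  also have "map_pmf (\<lambda>t. t i) ?F = K i"
    by (simp add: Pi_pmf_component)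
  also have "(\<integral>\<^sup>+y. ennreal (h y) \<partial>measure_pmf (K i)) = ennreal (\<Sum>y\<in>UNIV. h y * pmf (K i) y)"
    by (subst nn_integral_measure_pmf_support[where A=UNIV], simp_all)
       (subst sum_ennreal[symmetric], auto simp: h_nonneg ennreal_mult)
  also have "(\<Sum>y\<in>UNIV. h y * pmf (K i) y) = (\<Sum>a\<in>UNIV. \<Sum>l\<in>UNIV. h (a, l) * PsiL a i l)"
    by (simp add: sum.cartesian_product flip: UNIV_Times_UNIV) (auto simp: K intro!: sum.cong)
  also have "\<dots> = (\<Sum>a\<in>A 0. \<Sum>l\<in>UNIV. ?R l * PsiL a i l)"
    by (simp add: h_def indicator_def mult.assoc flip: sum_distrib_left)
  also have "\<dots> = (\<Sum>j\<in>UNIV. cyl_matrix PsiL (Suc n) A i j)"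
    by (simp add: sum_cyl_matrix_Suc mult.commute)
  finally show ?case .
qed

definition chain_path_law :: "('q::finite \<Rightarrow> ('g::countable \<times> 'q) pmf) \<Rightarrow> 'q \<Rightarrow> 'g stream measure" where
  "chain_path_law K i = distr (stream_space (measure_pmf (Pi_pmf UNIV undefined K)))
     (stream_space (count_space UNIV)) (\<lambda>fs. to_stream (chain_obs fs i))"

lemma measurable_chain_obs_stream:
  fixes F :: "('q::countable \<Rightarrow> 'g \<times> 'q) pmf"
  shows "(\<lambda>fs. to_stream (chain_obs fs i))
           \<in> measurable (stream_space (measure_pmf F)) (stream_space (count_space UNIV))"
  by (rule measurable_stream_space2) (simp add: to_stream_def)

lemma sets_chain_path_law: "sets (chain_path_law K i) = sets (stream_space (count_space UNIV))"
  by (simp add: chain_path_law_def)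

lemma prob_space_chain_path_law: "prob_space (chain_path_law K i)"
  unfolding chain_path_law_def
  by (rule prob_space.prob_space_distr[OF _ measurable_chain_obs_stream])
     (rule prob_space.prob_space_stream_space[OF prob_space_measure_pmf])

lemma emeasure_chain_path_law_cylinder:
  fixes K :: "'q::finite \<Rightarrow> ('g::finite \<times> 'q) pmf" and PsiL :: "'g \<Rightarrow> 'q mat"
  assumes "\<And>i a l. pmf (K i) (a, l) = PsiL a i l"
  shows "emeasure (chain_path_law K i) {\<omega> \<in> space (stream_space (count_space UNIV)). \<forall>k<n. \<omega> !! k \<in> A k}
       = ennreal (\<Sum>j\<in>UNIV. cyl_matrix PsiL n A i j)"
proof -
  let ?S = "stream_space (measure_pmf (Pi_pmf UNIV undefined K))"
  let ?X = "{\<omega> \<in> space (stream_space (count_space UNIV)). \<forall>k<n. \<omega> !! k \<in> A k}"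
  have "?X \<in> sets (stream_space (count_space UNIV))"
    by (rule sets_Collect_lessThan_All[where M="\<lambda>_. count_space UNIV"]) simp_all
  moreover have "(\<lambda>fs. to_stream (chain_obs fs i)) -` ?X \<inter> space ?S
      = {fs \<in> space ?S. \<forall>k<n. chain_obs fs i k \<in> A k}"
    by (auto simp: to_stream_def space_stream_space)
  ultimately show ?thesis
    unfolding chain_path_law_def
    by (simp add: emeasure_distr[OF measurable_chain_obs_stream] emeasure_chain_obs_cylinder[OF assms])
qed

definition hmm_measure :: "'a measure \<Rightarrow> ('a \<Rightarrow> 'q::finite mat) \<Rightarrow> ('q \<Rightarrow> real) \<Rightarrow> 'a stream measure \<Rightarrow> bool" where
  "hmm_measure M Psi \<pi> N \<longleftrightarrow> sets N = sets (stream_space M) \<and> prob_space N \<and>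
     (\<forall>n A. (\<forall>i<n. A i \<in> sets M) \<longrightarrow>
        emeasure N {\<omega> \<in> space (stream_space M). \<forall>i<n. \<omega> !! i \<in> A i} = cyl_value M Psi \<pi> n A)"

lemma hmm_prob_eq_The_hmm_measure: "hmm_prob M Psi \<pi> = (THE N. hmm_measure M Psi \<pi> N)"
  unfolding hmm_prob_def hmm_measure_def ..

lemma hmm_measure_count_space_unique:
  fixes PsiL :: "'g::countable \<Rightarrow> 'q::finite mat"
  assumes "hmm_measure (count_space UNIV) PsiL \<pi> N1" and "hmm_measure (count_space UNIV) PsiL \<pi> N2"
  shows "N1 = N2"
proof (rule stream_space_eq_sstart[where S=UNIV])
  show "prob_space N1" "prob_space N2" "sets N1 = sets (stream_space (count_space UNIV))"
    "sets N2 = sets (stream_space (count_space UNIV))"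
    using assms by (auto simp: hmm_measure_def)
next
  fix xs :: "'g list"
  have "sstart UNIV xs = {\<omega> \<in> space (stream_space (count_space UNIV)). \<forall>k<length xs. \<omega> !! k \<in> {xs ! k}}"
    by (auto simp: sstart_eq space_stream_space)
  then show "emeasure N1 (sstart UNIV xs) = emeasure N2 (sstart UNIV xs)"
    using assms by (simp add: hmm_measure_def del: insert_iff)
qed simp_all

lemma hmm_measure_count_space_exists:
  fixes PsiL :: "'g::finite \<Rightarrow> 'q::finite mat"
  assumes PsiL_nonneg: "\<And>a i j. PsiL a i j \<ge> 0"
    and stochastic: "\<And>i. (\<Sum>a\<in>UNIV. \<Sum>j\<in>UNIV. PsiL a i j) = 1"
    and \<pi>: "distribution \<pi>"
  shows "\<exists>N. hmm_measure (count_space UNIV) PsiL \<pi> N"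
proof -
  let ?C = "stream_space (count_space (UNIV::'g set))"
  define K where "K i = embed_pmf (\<lambda>(a, l). PsiL a i l)" for i
  have K: "pmf (K i) (a, l) = PsiL a i l" for i a l
    unfolding K_def using PsiL_nonneg stochastic[of i]
    by (subst pmf_embed_pmf_finite)
       (auto simp: sum.cartesian_product split_def simp flip: UNIV_Times_UNIV)
  have \<pi>_pmf: "pmf (embed_pmf \<pi>) i = \<pi> i" for i
    using \<pi> by (simp add: pmf_embed_pmf_finite distribution_def)
  have law_measurable: "chain_path_law K \<in> measurable (measure_pmf (embed_pmf \<pi>)) (subprob_algebra ?C)"
    by (auto simp: space_subprob_algebra sets_chain_path_law prob_space_chain_path_law
             intro: prob_space_imp_subprob_space)
  define N where "N = measure_pmf (embed_pmf \<pi>) \<bind> chain_path_law K"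
  have "emeasure N {\<omega> \<in> space ?C. \<forall>k<n. \<omega> !! k \<in> A k} = cyl_value (count_space UNIV) PsiL \<pi> n A"
    for n A
  proof -
    let ?X = "{\<omega> \<in> space ?C. \<forall>k<n. \<omega> !! k \<in> A k}"
    have X: "?X \<in> sets ?C"
      by (rule sets_Collect_lessThan_All[where M="\<lambda>_. count_space UNIV"]) simp_all
    have "emeasure N ?X = (\<integral>\<^sup>+i. emeasure (chain_path_law K i) ?X \<partial>measure_pmf (embed_pmf \<pi>))"
      unfolding N_def by (rule emeasure_bind[OF _ law_measurable X]) simp
    also have "\<dots> = (\<Sum>i\<in>UNIV. ennreal (\<pi> i) * (\<Sum>j\<in>UNIV. ennreal (cyl_matrix PsiL n A i j)))"
      by (subst nn_integral_measure_pmf_support[where A=UNIV])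
         (auto simp: emeasure_chain_path_law_cylinder[OF K] \<pi>_pmf mult.commute cyl_matrix_nonneg
                     PsiL_nonneg sum_ennreal)
    also have "\<dots> = cyl_value (count_space UNIV) PsiL \<pi> n A"
      by (simp add: cyl_value_count_space[OF PsiL_nonneg] sum_distrib_left)
    finally show ?thesis .
  qed
  moreover have "sets N = sets ?C"
    unfolding N_def by (rule sets_bind) (auto simp: sets_chain_path_law)
  moreover have "prob_space N"
    unfolding N_def
    by (rule prob_space.prob_space_bind[OF prob_space_measure_pmf _ law_measurable])
       (simp add: prob_space_chain_path_law)
  ultimately show ?thesis
    unfolding hmm_measure_def by blast
qed

lemma hmm_measure_hmm_prob_count_space:
  fixes PsiL :: "'g::finite \<Rightarrow> 'q::finite mat"
  assumes "\<And>a i j. PsiL a i j \<ge> 0" and "\<And>i. (\<Sum>a\<in>UNIV. \<Sum>j\<in>UNIV. PsiL a i j) = 1"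
    and "distribution \<pi>"
  shows "hmm_measure (count_space UNIV) PsiL \<pi> (hmm_prob (count_space UNIV) PsiL \<pi>)"
  unfolding hmm_prob_eq_The_hmm_measure
proof (rule theI')
  show "\<exists>!N. hmm_measure (count_space UNIV) PsiL \<pi> N"
    using hmm_measure_count_space_exists[of PsiL, OF assms] hmm_measure_count_space_unique by blast
qed

lemma cyl_value_eq_if_hmm_equiv_count_space:
  fixes PsiL :: "'g::finite \<Rightarrow> 'q::finite mat"
  assumes "\<And>a i j. PsiL a i j \<ge> 0" and "\<And>i. (\<Sum>a\<in>UNIV. \<Sum>j\<in>UNIV. PsiL a i j) = 1"
    and "distribution \<pi>1" and "distribution \<pi>2"
    and "hmm_equiv (count_space UNIV) PsiL \<pi>1 \<pi>2"
  shows "cyl_value (count_space UNIV) PsiL \<pi>1 n A = cyl_value (count_space UNIV) PsiL \<pi>2 n A"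
  using hmm_measure_hmm_prob_count_space[of PsiL, OF assms(1,2,3)]
    hmm_measure_hmm_prob_count_space[of PsiL, OF assms(1,2,4)]
    assms(5)
  by (auto simp: hmm_measure_def hmm_equiv_def)

section \<open>Transfer of equivalence\<close>

text \<open>Equal cylinder values make the predicates defining the two measures coincide, so no
  existence argument is needed on this side.\<close>

lemma hmm_equiv_if_cyl_value_eq:
  assumes "\<And>(n::nat) A. \<forall>k<n. A k \<in> sets M \<Longrightarrow> cyl_value M Psi \<pi>1 n A = cyl_value M Psi \<pi>2 n A"
  shows "hmm_equiv M Psi \<pi>1 \<pi>2"
  unfolding hmm_equiv_def hmm_prob_eq_The_hmm_measure hmm_measure_def
  using assms by (intro arg_cong[where f=The] ext) auto

lemma hmm_equiv_if_hmm_equiv_expansion: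
  fixes PsiL :: "'g::finite \<Rightarrow> 'q::finite mat" and s :: "'g \<Rightarrow> 'a \<Rightarrow> real"
  assumes "\<And>x i j. Psi x i j = (\<Sum>a\<in>UNIV. PsiL a i j * s a x)"
    and "\<And>a i j. PsiL a i j \<ge> 0" and "\<And>i. (\<Sum>a\<in>UNIV. \<Sum>j\<in>UNIV. PsiL a i j) = 1"
    and "\<And>a x. s a x \<ge> 0" and "\<And>a. s a \<in> borel_measurable M"
    and "distribution \<pi>1" and "distribution \<pi>2"
    and "hmm_equiv (count_space UNIV) PsiL \<pi>1 \<pi>2"
  shows "hmm_equiv M Psi \<pi>1 \<pi>2"
proof (rule hmm_equiv_if_cyl_value_eq)
  fix n :: nat and A assume A: "\<forall>k<n. A k \<in> sets M"
  have "cyl_value (count_space UNIV) PsiL \<pi>1 n B = cyl_value (count_space UNIV) PsiL \<pi>2 n B" for B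
    by (rule cyl_value_eq_if_hmm_equiv_count_space[of PsiL, OF assms(2,3,6,7,8)])
  then show "cyl_value M Psi \<pi>1 n A = cyl_value M Psi \<pi>2 n A"
    unfolding cyl_value_expansion[OF assms(1,2,4,5) A] by simp
qed

lemma psi_of_eq_sum_label_red:
  fixes E :: "'q \<Rightarrow> 'q \<Rightarrow> (real \<times> 'g::finite) option"
  assumes "\<And>i j p \<gamma>. E i j = Some (p, \<gamma>) \<Longrightarrow> s \<gamma> = sem \<gamma>"
  shows "psi_of sem E x i j = (\<Sum>a\<in>UNIV. label_red E a i j * s a x)"
proof (cases "E i j")
  case (Some e)
  then obtain p \<gamma> where e: "E i j = Some (p, \<gamma>)"
    by (cases e) auto
  have "(\<Sum>a\<in>UNIV. label_red E a i j * s a x) = (\<Sum>a\<in>UNIV. if a = \<gamma> then p * s \<gamma> x else 0)"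
    by (intro sum.cong) (auto simp: label_red_def e)
  then show ?thesis
    using assms[OF e] by (simp add: psi_of_def e)
qed (simp add: psi_of_def label_red_def)

lemma label_red_nonneg:
  assumes "\<And>i j p \<gamma>. E i j = Some (p, \<gamma>) \<Longrightarrow> p \<ge> 0"
  shows "label_red E a i j \<ge> 0"
  using assms by (auto simp: label_red_def split: option.splits)

lemma label_red_stochastic:
  fixes E :: "'q::finite \<Rightarrow> 'q \<Rightarrow> (real \<times> 'g::finite) option"
  assumes entries: "\<And>i j p \<gamma>. E i j = Some (p, \<gamma>) \<Longrightarrow>
      p \<ge> 0 \<and> sem \<gamma> \<in> borel_measurable M \<and> (\<integral>\<^sup>+x. ennreal (sem \<gamma> x) \<partial>M) = 1"
    and stochastic: "(\<Sum>j\<in>UNIV. \<integral>\<^sup>+x. ennreal (psi_of sem E x i j) \<partial>M) = 1"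
  shows "(\<Sum>a\<in>UNIV. \<Sum>j\<in>UNIV. label_red E a i j) = 1"
proof -
  have nonneg: "label_red E a i j \<ge> 0" for a j
    by (rule label_red_nonneg) (use entries in blast)
  have integral: "(\<integral>\<^sup>+x. ennreal (psi_of sem E x i j) \<partial>M) = ennreal (\<Sum>a\<in>UNIV. label_red E a i j)" for j
  proof (cases "E i j")
    case (Some e)
    then obtain p \<gamma> where e: "E i j = Some (p, \<gamma>)"
      by (cases e) auto
    have "(\<lambda>x. ennreal (sem \<gamma> x)) \<in> borel_measurable M"
      by (rule measurable_compose[OF _ measurable_ennreal]) (use entries[OF e] in blast)
    then have "(\<integral>\<^sup>+x. ennreal (psi_of sem E x i j) \<partial>M) = ennreal p * (\<integral>\<^sup>+x. ennreal (sem \<gamma> x) \<partial>M)"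
      using entries[OF e] by (simp add: psi_of_def e ennreal_mult' nn_integral_cmult)
    then show ?thesis
      using entries[OF e] by (simp add: label_red_def e)
  qed (simp add: psi_of_def label_red_def)
  have "1 = (\<Sum>j\<in>UNIV. ennreal (\<Sum>a\<in>UNIV. label_red E a i j))"
    using stochastic by (simp add: integral)
  also have "\<dots> = ennreal (\<Sum>j\<in>UNIV. \<Sum>a\<in>UNIV. label_red E a i j)"
    by (rule sum_ennreal) (simp add: sum_nonneg nonneg)
  finally show ?thesis
    by (subst sum.swap) simp
qed

theorem proposition9:
  fixes M :: "'a::topological_space measure"
    and sem :: "'g::finite \<Rightarrow> 'a \<Rightarrow> real"
    and E :: "'q::finite \<Rightarrow> 'q \<Rightarrow> (real \<times> 'g) option"
    and \<pi>1 \<pi>2 :: "'q \<Rightarrow> real"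
  assumes space: "space M = UNIV"
    and opens: "\<And>U. open U \<Longrightarrow> U \<in> sets M"
    and opens_pos: "\<And>U. open U \<Longrightarrow> U \<noteq> {} \<Longrightarrow> emeasure M U > 0"
    and sem_nonneg: "\<And>\<gamma> x. sem \<gamma> x \<ge> 0"
    and entries: "\<And>i j p \<gamma>. E i j = Some (p, \<gamma>) \<Longrightarrow>
        p \<in> \<rat> \<and> p > 0 \<and> sem \<gamma> \<in> borel_measurable M \<and> (\<integral>\<^sup>+ x. ennreal (sem \<gamma> x) \<partial>M) = 1"
    and hmm: "is_hmm M (psi_of sem E)"
    and d1: "distribution \<pi>1" and d2: "distribution \<pi>2"
    and L: "hmm_equiv (count_space UNIV) (label_red E) \<pi>1 \<pi>2"
  shows "hmm_equiv M (psi_of sem E) \<pi>1 \<pi>2"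
proof -
  \<comment> \<open>Unused profiles carry no measurability assumption; they have weight 0 in \<open>label_red E\<close>.\<close>
  define s where "s \<gamma> = (if \<exists>i j p. E i j = Some (p, \<gamma>) then sem \<gamma> else (\<lambda>_. 0))" for \<gamma>
  have s_sem: "s \<gamma> = sem \<gamma>" if "E i j = Some (p, \<gamma>)" for i j p \<gamma>
    using that by (auto simp: s_def)
  have s_measurable: "s \<gamma> \<in> borel_measurable M" for \<gamma>
    using entries by (auto simp: s_def)
  have entries_nonneg: "E i j = Some (p, \<gamma>) \<Longrightarrow>
      p \<ge> 0 \<and> sem \<gamma> \<in> borel_measurable M \<and> (\<integral>\<^sup>+x. ennreal (sem \<gamma> x) \<partial>M) = 1" for i j p \<gamma>
    using entries[of i j p \<gamma>] by simp
  show ?thesis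
  proof (rule hmm_equiv_if_hmm_equiv_expansion[OF _ _ _ _ s_measurable d1 d2 L])
    show "psi_of sem E x i j = (\<Sum>a\<in>UNIV. label_red E a i j * s a x)" for x i j
      using s_sem by (rule psi_of_eq_sum_label_red)
    show "label_red E a i j \<ge> 0" for a i j
      by (rule label_red_nonneg) (use entries_nonneg in blast)
    show "(\<Sum>a\<in>UNIV. \<Sum>j\<in>UNIV. label_red E a i j) = 1" for i
      using hmm by (intro label_red_stochastic[OF entries_nonneg]) (auto simp: is_hmm_def)
    show "s a x \<ge> 0" for a x
      by (simp add: s_def sem_nonneg)
  qed
qed

end
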